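(* Let $\tau,C_1,C_2>0$ and let $y\in C([-\tau,\infty))$ be a nonnegative function, differentiable on $(-\tau,0)$ and continuously differentiable on $(0,\infty)$, such that $$|\dot y(t)|\le C_1y(t)+C_2y(t-\tau)\qquad\text{for all }t>0.$$ Let $$M:=\max\Big\{\sup_{s\in(-\tau,0)}\frac{|\dot y(s)|}{y(s)},\ \frac{|\dot y(0^+)|}{y(0)}\Big\}<\infty,$$ where $\dot y(0^+)$ is the right derivative of $y$ at $0$. If there exists $\kappa>0$ with $$\kappa>\max\{M,\ C_1+C_2e^{\kappa\tau}\},$$ then for all $s,t>0$ with $-\tau<t-s$, $$e^{-\kappa s}y(t)<y(t-s)<e^{\kappa s}y(t).$$ *)

theory Defs
  imports "HOL-Analysis.Analysis"
begin

end

theory Submission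
  imports Defs
begin

text \<open>Wherever |y'| < \<kappa> y, the functions y(t) exp(\<kappa> t) and y(t) exp(-\<kappa> t) are strictly
  increasing and decreasing respectively, which gives both bounds. On (-\<tau>, 0) this derivative
  bound is the choice \<kappa> > M; at t > 0 the delay inequality and \<kappa> > C1 + C2 exp(\<kappa> \<tau>) give it
  as long as y(t - \<tau>) < exp(\<kappa> \<tau>) y(t), which in turn is the upper bound on [t - \<tau>, t].
  A first-failure-time argument turns this circle into an induction over t \<ge> 0. Since the
  monotonicity argument tolerates the single point 0, the hypotheses on the derivative at 0
  are never used.\<close>

lemma exp_weighted_strict_increasing:
  fixes y y' :: "real \<Rightarrow> real" and a b k :: real
  assumes "a < b" and cont: "continuous_on {a..b} y"
    and deriv: "\<And>x. a < x \<Longrightarrow> x < b \<Longrightarrow> (y has_real_derivative y' x) (at x)"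
    and pos: "\<And>x. a < x \<Longrightarrow> x < b \<Longrightarrow> y' x + k * y x > 0"
  shows "y a * exp (k * a) < y b * exp (k * b)"
proof (rule DERIV_pos_imp_increasing_open[OF \<open>a < b\<close>])
  fix x assume x: "a < x" "x < b"
  have "((\<lambda>x. y x * exp (k * x)) has_real_derivative (y' x + k * y x) * exp (k * x)) (at x)"
    by (auto intro!: derivative_eq_intros deriv[OF x] simp: algebra_simps)
  moreover have "(y' x + k * y x) * exp (k * x) > 0"
    using pos[OF x] by simp
  ultimately show "\<exists>z. ((\<lambda>x. y x * exp (k * x)) has_real_derivative z) (at x) \<and> z > 0"
    by blast
next
  show "continuous_on {a..b} (\<lambda>x. y x * exp (k * x))"
    by (intro continuous_intros cont)
qed

lemma exp_growth_bounds:
  fixes y y' :: "real \<Rightarrow> real" and a b k :: real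
  assumes "a < b" and cont: "continuous_on {a..b} y"
    and deriv: "\<And>x. a < x \<Longrightarrow> x < b \<Longrightarrow> (y has_real_derivative y' x) (at x)"
    and bound: "\<And>x. a < x \<Longrightarrow> x < b \<Longrightarrow> \<bar>y' x\<bar> < k * y x"
  shows "exp (- k * (b - a)) * y b < y a \<and> y a < exp (k * (b - a)) * y b"
proof
  have below: "y' x + k * y x > 0" and above: "- y' x + (- k) * (- y x) > 0"
    if "a < x" "x < b" for x
    using bound[OF that] by (auto simp: abs_less_iff)
  have "y a * exp (k * a) < y b * exp (k * b)"
    by (rule exp_weighted_strict_increasing[OF \<open>a < b\<close> cont deriv below])
  then have "y a * exp (k * a) * exp (- k * a) < y b * exp (k * b) * exp (- k * a)"
    by simp
  then show "y a < exp (k * (b - a)) * y b"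
    by (simp add: mult.assoc algebra_simps flip: exp_add)
  \<comment> \<open>the lower bound is the upper one for \<open>-y\<close> with rate \<open>-k\<close>\<close>
  have "- y a * exp (- k * a) < - y b * exp (- k * b)"
    by (rule exp_weighted_strict_increasing[OF \<open>a < b\<close> _ _ above])
      (auto intro!: continuous_intros cont derivative_eq_intros deriv)
  then have "y b * exp (- k * b) * exp (k * a) < y a * exp (- k * a) * exp (k * a)"
    by simp
  then show "exp (- k * (b - a)) * y b < y a"
    by (simp add: mult.assoc algebra_simps flip: exp_add)
qed

lemma exp_growth_bounds_except_point:
  fixes y y' :: "real \<Rightarrow> real" and a b c k :: real
  assumes "a < b" and cont: "continuous_on {a..b} y"
    and deriv: "\<And>x. a < x \<Longrightarrow> x < b \<Longrightarrow> x \<noteq> c \<Longrightarrow> (y has_real_derivative y' x) (at x)"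
    and bound: "\<And>x. a < x \<Longrightarrow> x < b \<Longrightarrow> x \<noteq> c \<Longrightarrow> \<bar>y' x\<bar> < k * y x"
  shows "exp (- k * (b - a)) * y b < y a \<and> y a < exp (k * (b - a)) * y b"
proof (cases "a < c \<and> c < b")
  case False
  then show ?thesis
    using exp_growth_bounds[OF \<open>a < b\<close> cont, of y' k] deriv bound by force
next
  case True
  have cont_on: "continuous_on {u..v} y" if "a \<le> u" "v \<le> b" for u v
    using continuous_on_subset[OF cont] that by auto
  have left: "exp (- k * (c - a)) * y c < y a \<and> y a < exp (k * (c - a)) * y c"
    by (rule exp_growth_bounds[of a c y y']) (use True cont_on deriv bound in auto)
  have right: "exp (- k * (b - c)) * y b < y c \<and> y c < exp (k * (b - c)) * y b"
    by (rule exp_growth_bounds[of c b y y']) (use True cont_on deriv bound in auto)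
  have "exp (- k * (b - a)) * y b = exp (- k * (c - a)) * (exp (- k * (b - c)) * y b)"
    by (simp add: algebra_simps flip: exp_add)
  also have "\<dots> < exp (- k * (c - a)) * y c"
    using right by simp
  also have "\<dots> < y a"
    using left by simp
  finally have lower: "exp (- k * (b - a)) * y b < y a" .
  have "y a < exp (k * (c - a)) * y c"
    using left by simp
  also have "\<dots> < exp (k * (c - a)) * (exp (k * (b - c)) * y b)"
    using right by simp
  also have "\<dots> = exp (k * (b - a)) * y b"
    by (simp add: algebra_simps flip: exp_add)
  finally show ?thesis
    using lower by simp
qed

lemma continuous_induction_positive:
  fixes F :: "real \<Rightarrow> real" and a t :: real
  assumes cont: "continuous_on {a..} F"
    and step: "\<And>t. a \<le> t \<Longrightarrow> (\<And>u. a < u \<Longrightarrow> u < t \<Longrightarrow> F u > 0) \<Longrightarrow> F t > 0"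
    and "a \<le> t"
  shows "F t > 0"
proof (rule ccontr)
  assume "\<not> F t > 0"
  define S where "S = {a..} \<inter> F -` {..0}"
  have "S \<noteq> {}"
    using \<open>a \<le> t\<close> \<open>\<not> F t > 0\<close> by (auto simp: S_def)
  moreover have "bdd_below S"
    by (rule bdd_belowI[of _ a]) (auto simp: S_def)
  moreover have "closed S"
    unfolding S_def by (rule continuous_closed_preimage[OF cont]) auto
  ultimately have first_failure: "Inf S \<in> S"
    by (rule closed_contains_Inf)
  have "F u > 0" if "a < u" "u < Inf S" for u
  proof (rule ccontr)
    assume "\<not> F u > 0"
    then have "u \<in> S"
      using that by (auto simp: S_def)
    then show False
      using cInf_lower[OF _ \<open>bdd_below S\<close>] that by fastforce
  qed
  then have "F (Inf S) > 0"
    using step first_failure by (auto simp: S_def)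
  then show False
    using first_failure by (auto simp: S_def)
qed

locale delay_differential_inequality =
  fixes y y' :: "real \<Rightarrow> real" and \<tau> C1 C2 \<kappa> :: real
  assumes tau_pos: "\<tau> > 0" and C2_nonneg: "C2 \<ge> 0"
    and cont: "continuous_on {-\<tau>..} y"
    and nonneg: "\<And>t. -\<tau> \<le> t \<Longrightarrow> y t \<ge> 0"
    and history_deriv: "\<And>s. -\<tau> < s \<Longrightarrow> s < 0 \<Longrightarrow> (y has_real_derivative y' s) (at s)"
    and history_bound: "\<And>s. -\<tau> < s \<Longrightarrow> s < 0 \<Longrightarrow> \<bar>y' s\<bar> < \<kappa> * y s"
    and deriv: "\<And>t. t > 0 \<Longrightarrow> (y has_real_derivative y' t) (at t)"
    and ineq: "\<And>t. t > 0 \<Longrightarrow> \<bar>y' t\<bar> \<le> C1 * y t + C2 * y (t - \<tau>)"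
    and kappa_large: "C1 + C2 * exp (\<kappa> * \<tau>) < \<kappa>"
begin

lemma deriv_bound_if_delay_controlled:
  assumes "t > 0" and delay: "y (t - \<tau>) < exp (\<kappa> * \<tau>) * y t"
  shows "\<bar>y' t\<bar> < \<kappa> * y t"
proof -
  have "0 \<le> y (t - \<tau>)"
    using nonneg \<open>t > 0\<close> by simp
  then have "exp (\<kappa> * \<tau>) * y t > 0"
    using delay by linarith
  then have "y t > 0"
    by (simp add: zero_less_mult_iff)
  have "\<bar>y' t\<bar> \<le> C1 * y t + C2 * y (t - \<tau>)"
    using ineq \<open>t > 0\<close> .
  also have "\<dots> \<le> (C1 + C2 * exp (\<kappa> * \<tau>)) * y t"
    using mult_left_mono[OF less_imp_le[OF delay] C2_nonneg] by (simp add: algebra_simps)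
  also have "\<dots> < \<kappa> * y t"
    using kappa_large \<open>y t > 0\<close> by simp
  finally show ?thesis .
qed

lemma growth_bounds_if_delay_controlled:
  assumes "0 \<le> t" and "s > 0" and "-\<tau> \<le> t - s"
    and delay: "\<And>u. 0 < u \<Longrightarrow> u < t \<Longrightarrow> y (u - \<tau>) < exp (\<kappa> * \<tau>) * y u"
  shows "exp (- \<kappa> * s) * y t < y (t - s) \<and> y (t - s) < exp (\<kappa> * s) * y t"
proof -
  have "exp (- \<kappa> * (t - (t - s))) * y t < y (t - s) \<and> y (t - s) < exp (\<kappa> * (t - (t - s))) * y t"
  proof (rule exp_growth_bounds_except_point[where c = 0])
    show "continuous_on {t - s..t} y"
      using continuous_on_subset[OF cont] \<open>-\<tau> \<le> t - s\<close> by auto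
    fix x assume x: "t - s < x" "x < t" "x \<noteq> 0"
    show "(y has_real_derivative y' x) (at x)"
      using x history_deriv deriv \<open>-\<tau> \<le> t - s\<close> by (cases "x < 0") auto
    show "\<bar>y' x\<bar> < \<kappa> * y x"
      using x history_bound deriv_bound_if_delay_controlled delay \<open>-\<tau> \<le> t - s\<close>
      by (cases "x < 0") auto
  qed (use \<open>s > 0\<close> in simp)
  then show ?thesis
    by simp
qed

lemma delay_controlled:
  assumes "0 \<le> t"
  shows "y (t - \<tau>) < exp (\<kappa> * \<tau>) * y t"
proof -
  have "continuous_on {0..} (\<lambda>t. exp (\<kappa> * \<tau>) * y t - y (t - \<tau>))"
    using tau_pos
    by (intro continuous_intros continuous_on_subset[OF cont]
        continuous_on_compose2[OF cont]) auto
  then have "exp (\<kappa> * \<tau>) * y t - y (t - \<tau>) > 0"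
  proof (rule continuous_induction_positive[OF _ _ \<open>0 \<le> t\<close>])
    fix r :: real
    assume "0 \<le> r" and "\<And>u. 0 < u \<Longrightarrow> u < r \<Longrightarrow> exp (\<kappa> * \<tau>) * y u - y (u - \<tau>) > 0"
    then show "exp (\<kappa> * \<tau>) * y r - y (r - \<tau>) > 0"
      using growth_bounds_if_delay_controlled[of r \<tau>] tau_pos by auto
  qed
  then show ?thesis
    by simp
qed

theorem growth_bounds:
  assumes "0 \<le> t" and "s > 0" and "-\<tau> \<le> t - s"
  shows "exp (- \<kappa> * s) * y t < y (t - s) \<and> y (t - s) < exp (\<kappa> * s) * y t"
  using growth_bounds_if_delay_controlled[OF assms] delay_controlled by simp

end

theorem lemma3p5:
  fixes y :: "real \<Rightarrow> real" and \<tau> C1 C2 \<kappa> D0 :: real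
  assumes tau_pos: "\<tau> > 0" and C1_pos: "C1 > 0" and C2_pos: "C2 > 0"
    and cont: "continuous_on {-\<tau>..} y"
    and nonneg: "\<forall>t\<ge>-\<tau>. y t \<ge> 0"
    and pos_hist: "\<forall>s\<in>{-\<tau><..0}. y s > 0"
    and diff_hist: "\<forall>s\<in>{-\<tau><..<0}. y differentiable (at s)"
    and diff_pos: "\<forall>t>0. y differentiable (at t)"
    and cont_deriv: "continuous_on {0<..} (deriv y)"
    and right_deriv: "(y has_real_derivative D0) (at_right 0)"
    and ineq: "\<forall>t>0. \<bar>deriv y t\<bar> \<le> C1 * y t + C2 * y (t - \<tau>)"
    and M_finite: "bdd_above ((\<lambda>s. \<bar>deriv y s\<bar> / y s) ` {-\<tau><..<0})"
    and kappa_pos: "\<kappa> > 0"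
    and kappa_M: "\<kappa> > max (Sup ((\<lambda>s. \<bar>deriv y s\<bar> / y s) ` {-\<tau><..<0})) (\<bar>D0\<bar> / y 0)"
    and kappa_C: "\<kappa> > C1 + C2 * exp (\<kappa> * \<tau>)"
  shows "\<forall>s t. s > 0 \<longrightarrow> t > 0 \<longrightarrow> -\<tau> < t - s \<longrightarrow>
           exp (-\<kappa> * s) * y t < y (t - s) \<and> y (t - s) < exp (\<kappa> * s) * y t"
proof -
  have deriv_at: "(y has_real_derivative deriv y x) (at x)" if "-\<tau> < x" "x \<noteq> 0" for x
    using that diff_hist diff_pos DERIV_deriv_iff_real_differentiable
    by (cases "x < 0") auto
  have history_bound: "\<bar>deriv y s\<bar> < \<kappa> * y s" if "-\<tau> < s" "s < 0" for s
  proof -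
    have "\<bar>deriv y s\<bar> / y s \<le> Sup ((\<lambda>s. \<bar>deriv y s\<bar> / y s) ` {-\<tau><..<0})"
      by (rule cSup_upper) (use that M_finite in auto)
    then have "\<bar>deriv y s\<bar> / y s < \<kappa>"
      using kappa_M by linarith
    then show ?thesis
      using pos_hist that by (simp add: divide_less_eq)
  qed
  interpret delay_differential_inequality y "deriv y" \<tau> C1 C2 \<kappa>
    using tau_pos C2_pos cont nonneg deriv_at history_bound ineq kappa_C
    by unfold_locales auto
  show ?thesis
    using growth_bounds by force
qed

end
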